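(* Let $t<k\le n$ and $\lambda$ be positive integers. If there exist a Steiner system S$(t,k,n)$ and a perpendicular array PA$_\lambda(k,n,n)$, then there exists a large set with multiplicity LS$(t,k,n;\mu)$, where $\mu=\lambda\binom{n}{t}\big/\binom{k}{t}$.
   Context: A Steiner system S$(t,k,n)$ is a pair $(Q,B)$ where $Q$ is an $n$-set and $B$ is a collection of $k$-subsets (blocks) of $Q$ such that every $t$-subset of $Q$ is contained in exactly one block. A large set with multiplicity $\mu$, LS$(t,k,n;\mu)$, is a family (the same system may occur more than once) of Steiner systems S$(t,k,n)$ on a common $n$-set $Q$ such that every $k$-subset of $Q$ is a block of exactly $\mu$ of the systems. A perpendicular array PA$_\lambda(k,\ell,n)$ is a $\lambda\binom{n}{k}\times \ell$ matrix with entries from an $n$-set such that each row has $\ell$ distinct entries and, in the submatrix formed by any $k$ columns, each $k$-subset of the $n$-set occurs (as the set of entries of a row) exactly $\lambda$ times; for $\ell=n$ its rows are permutations of the $n$-set. *)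

theory Defs
  imports Main "HOL-Library.Multiset"
begin

definition steiner_system :: "nat \<Rightarrow> nat \<Rightarrow> 'a set \<Rightarrow> 'a set set \<Rightarrow> bool" where
  "steiner_system t k Q B \<longleftrightarrow>
     finite Q \<and>
     (\<forall>K\<in>B. K \<subseteq> Q \<and> card K = k) \<and>
     (\<forall>T. T \<subseteq> Q \<and> card T = t \<longrightarrow> (\<exists>!K. K \<in> B \<and> T \<subseteq> K))"

definition large_set :: "nat \<Rightarrow> nat \<Rightarrow> nat \<Rightarrow> 'a set \<Rightarrow> 'a set set multiset \<Rightarrow> bool" where
  "large_set t k mu Q F \<longleftrightarrow>
     finite Q \<and>
     (\<forall>B\<in>#F. steiner_system t k Q B) \<and>
     (\<forall>K. K \<subseteq> Q \<and> card K = k \<longrightarrow> size (filter_mset (\<lambda>B. K \<in> B) F) = mu)"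

definition perpendicular_array :: "nat \<Rightarrow> nat \<Rightarrow> nat \<Rightarrow> 'a set \<Rightarrow> 'a list list \<Rightarrow> bool" where
  "perpendicular_array lam k l X M \<longleftrightarrow>
     finite X \<and>
     length M = lam * (card X choose k) \<and>
     (\<forall>r\<in>set M. length r = l \<and> distinct r \<and> set r \<subseteq> X) \<and>
     (\<forall>C K. C \<subseteq> {..<l} \<and> card C = k \<and> K \<subseteq> X \<and> card K = k \<longrightarrow>
        length (filter (\<lambda>r. (\<lambda>i. r ! i) ` C = K) M) = lam)"

end

theory Submission
  imports Defs
begin

(* Fix a bijection \<phi> from the points of the Steiner system S(t,k,n) onto the column indices
  {..<n}. Every row r of the perpendicular array PA_lam(k,n,n) is a permutation of the n-set X,
  so q \<mapsto> r ! \<phi> q relabels the Steiner system into one on X. A k-subset K of X is a block of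
  the copy belonging to r iff r maps \<phi> ` b onto K for some block b, and that block is unique.
  For each fixed block b, the column set \<phi> ` b has k elements, so exactly lam rows do this.
  Hence K lies in exactly lam * |B| of the copies, and double counting t-subsets gives
  |B| * (k choose t) = n choose t. *)

lemma steiner_system_finite_blocks:
  assumes "steiner_system t k Q B"
  shows "finite B"
proof -
  have "B \<subseteq> Pow Q" and "finite Q"
    using assms unfolding steiner_system_def by auto
  then show ?thesis
    by (meson finite_Pow_iff finite_subset)
qed

lemma steiner_system_card_blocks:
  assumes st: "steiner_system t k Q B"
  shows "card B * (k choose t) = card Q choose t"
proof -
  have fin: "finite Q" and blocks: "\<And>b. b \<in> B \<Longrightarrow> b \<subseteq> Q \<and> card b = k"
    and unique: "\<And>T. T \<subseteq> Q \<Longrightarrow> card T = t \<Longrightarrow> \<exists>!b. b \<in> B \<and> T \<subseteq> b"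
    using st unfolding steiner_system_def by auto
  define subsets where "subsets A = {T. T \<subseteq> A \<and> card T = t}" for A :: "'a set"
  have card_subsets: "card (subsets A) = card A choose t" if "finite A" for A
    unfolding subsets_def using n_subsets[OF that] .
  have partition: "subsets Q = (\<Union>b\<in>B. subsets b)"
  proof (intro equalityI subsetI)
    fix T assume "T \<in> subsets Q"
    then have T: "T \<subseteq> Q" "card T = t"
      unfolding subsets_def by auto
    then obtain b where "b \<in> B" "T \<subseteq> b"
      using unique by blast
    with T show "T \<in> (\<Union>b\<in>B. subsets b)"
      unfolding subsets_def by blast
  next
    fix T assume "T \<in> (\<Union>b\<in>B. subsets b)"
    then show "T \<in> subsets Q"
      using blocks unfolding subsets_def by blast
  qed
  have disjoint: "subsets b \<inter> subsets c = {}" if "b \<in> B" "c \<in> B" "b \<noteq> c" for b c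
  proof (rule equals0I)
    fix T assume "T \<in> subsets b \<inter> subsets c"
    then have "T \<subseteq> b" "T \<subseteq> c" "card T = t"
      unfolding subsets_def by auto
    moreover have "T \<subseteq> Q"
      using \<open>T \<subseteq> b\<close> blocks[OF \<open>b \<in> B\<close>] by blast
    ultimately show False
      using unique that by blast
  qed
  have fin_blocks: "finite b" if "b \<in> B" for b
    using that blocks fin finite_subset by blast
  have "card Q choose t = card (\<Union>b\<in>B. subsets b)"
    using card_subsets[OF fin] partition by simp
  also have "\<dots> = (\<Sum>b\<in>B. card (subsets b))"
    using steiner_system_finite_blocks[OF st] fin_blocks disjoint
    by (intro card_UN_disjoint) (auto simp: subsets_def)
  also have "\<dots> = card B * (k choose t)"
    using card_subsets fin_blocks blocks by simp
  finally show ?thesis ..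
qed

lemma steiner_system_image:
  assumes f: "bij_betw f Q X" and st: "steiner_system t k Q B"
  shows "steiner_system t k X ((`) f ` B)"
proof -
  have inj: "inj_on f Q" and img: "f ` Q = X"
    using f by (auto simp: bij_betw_def)
  have blocks: "\<And>b. b \<in> B \<Longrightarrow> b \<subseteq> Q \<and> card b = k"
    and unique: "\<And>T. T \<subseteq> Q \<Longrightarrow> card T = t \<Longrightarrow> \<exists>!b. b \<in> B \<and> T \<subseteq> b"
    using st unfolding steiner_system_def by auto
  have image_subset_block_iff: "f ` A \<subseteq> f ` b \<longleftrightarrow> A \<subseteq> b" if "A \<subseteq> Q" "b \<in> B" for A b
    using that blocks inj
    by (metis inj_on_image_mem_iff image_subset_iff image_mono subsetD subsetI)
  have "\<exists>!K. K \<in> (`) f ` B \<and> T \<subseteq> K" if T: "T \<subseteq> X" "card T = t" for T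
  proof -
    define T' where "T' = Q \<inter> f -` T"
    have T': "T' \<subseteq> Q" "f ` T' = T"
      using T img unfolding T'_def by auto
    then have "card T' = t"
      using T inj by (metis card_image inj_on_subset)
    then obtain b where b: "b \<in> B" "T' \<subseteq> b" and b_unique: "\<And>c. c \<in> B \<Longrightarrow> T' \<subseteq> c \<Longrightarrow> c = b"
      using unique[OF T'(1)] by metis
    show ?thesis
    proof (rule ex1I[of _ "f ` b"])
      show "f ` b \<in> (`) f ` B \<and> T \<subseteq> f ` b"
        using b T' by auto
      show "K = f ` b" if "K \<in> (`) f ` B \<and> T \<subseteq> K" for K
        using that b_unique image_subset_block_iff T' by auto
    qed
  qed
  moreover have "card (f ` b) = k" "f ` b \<subseteq> X" if "b \<in> B" for b
    using that blocks inj img by (auto simp: card_image inj_on_subset)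
  moreover have "finite X"
    using st img unfolding steiner_system_def by auto
  ultimately show ?thesis
    unfolding steiner_system_def by auto
qed

lemma length_filter_eq_sum:
  assumes "finite B"
    and "\<And>x. x \<in> set xs \<Longrightarrow> P x \<longleftrightarrow> (\<exists>b\<in>B. R b x)"
    and "\<And>x b c. x \<in> set xs \<Longrightarrow> b \<in> B \<Longrightarrow> c \<in> B \<Longrightarrow> R b x \<Longrightarrow> R c x \<Longrightarrow> b = c"
  shows "length (filter P xs) = (\<Sum>b\<in>B. length (filter (R b) xs))"
  using assms(2,3)
proof (induction xs)
  case Nil
  then show ?case by simp
next
  case (Cons x xs)
  have IH: "length (filter P xs) = (\<Sum>b\<in>B. length (filter (R b) xs))"
    using Cons.prems by (intro Cons.IH) auto
  have card_witnesses: "card {b \<in> B. R b x} = (if P x then 1 else 0)"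
  proof (cases "P x")
    case True
    then obtain b where "b \<in> B" "R b x"
      using Cons.prems(1) by auto
    then have "{b \<in> B. R b x} = {b}"
      using Cons.prems(2) by auto
    then show ?thesis
      using True by simp
  next
    case False
    then show ?thesis
      using Cons.prems(1) by (auto simp: card_eq_0_iff)
  qed
  have "length (filter P (x # xs)) = (if P x then 1 else 0) + length (filter P xs)"
    by simp
  also have "\<dots> = card {b \<in> B. R b x} + (\<Sum>b\<in>B. length (filter (R b) xs))"
    using card_witnesses IH by simp
  also have "\<dots> = (\<Sum>b\<in>B. (if R b x then 1 else 0) + length (filter (R b) xs))"
    using assms(1) by (simp add: sum.distrib sum.If_cases Int_def conj_commute)
  also have "\<dots> = (\<Sum>b\<in>B. length (filter (R b) (x # xs)))"
    by (intro sum.cong) auto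
  finally show ?case .
qed

lemma perpendicular_array_row_bij:
  assumes "perpendicular_array lam k (card X) X M" and "r \<in> set M"
  shows "bij_betw ((!) r) {..<card X} X"
proof -
  have "finite X" and r: "length r = card X" "distinct r" "set r \<subseteq> X"
    using assms unfolding perpendicular_array_def by auto
  then have "set r = X"
    by (metis card_subset_eq distinct_card)
  then show ?thesis
    using r by (metis bij_betw_nth)
qed

lemma large_set_from_perpendicular_array:
  assumes st: "steiner_system t k Q B" and \<phi>: "bij_betw \<phi> Q {..<card X}"
    and pa: "perpendicular_array lam k (card X) X M"
  defines "\<sigma> r \<equiv> (\<lambda>q. r ! \<phi> q)"
  shows "large_set t k (lam * card B) X (image_mset (\<lambda>r. (`) (\<sigma> r) ` B) (mset M))"
proof -
  have blocks: "\<And>b. b \<in> B \<Longrightarrow> b \<subseteq> Q \<and> card b = k"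
    using st unfolding steiner_system_def by auto
  have fin: "finite X"
    and columns: "\<And>C K. C \<subseteq> {..<card X} \<Longrightarrow> card C = k \<Longrightarrow> K \<subseteq> X \<Longrightarrow> card K = k \<Longrightarrow>
        length (filter (\<lambda>r. (\<lambda>i. r ! i) ` C = K) M) = lam"
    using pa unfolding perpendicular_array_def by auto
  have \<sigma>: "bij_betw (\<sigma> r) Q X" if "r \<in> set M" for r
    using bij_betw_trans[OF \<phi> perpendicular_array_row_bij[OF pa that]]
    unfolding \<sigma>_def comp_def .
  have "length (filter (\<lambda>r. K \<in> (`) (\<sigma> r) ` B) M) = lam * card B"
    if K: "K \<subseteq> X" "card K = k" for K
  proof -
    have "length (filter (\<lambda>r. K \<in> (`) (\<sigma> r) ` B) M)
        = (\<Sum>b\<in>B. length (filter (\<lambda>r. \<sigma> r ` b = K) M))"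
    proof (rule length_filter_eq_sum[OF steiner_system_finite_blocks[OF st]])
      show "b = c" if "r \<in> set M" "b \<in> B" "c \<in> B" "\<sigma> r ` b = K" "\<sigma> r ` c = K" for r b c
        using that \<sigma>[of r] blocks by (metis bij_betw_def inj_on_image_eq_iff)
    qed auto
    also have "\<dots> = (\<Sum>b\<in>B. lam)"
    proof (rule sum.cong[OF refl])
      fix b assume "b \<in> B"
      then have "\<phi> ` b \<subseteq> {..<card X}" "card (\<phi> ` b) = k"
        using blocks \<phi> unfolding bij_betw_def by (blast, metis card_image inj_on_subset)
      moreover have "\<sigma> r ` b = (\<lambda>i. r ! i) ` (\<phi> ` b)" for r
        unfolding \<sigma>_def by auto
      ultimately show "length (filter (\<lambda>r. \<sigma> r ` b = K) M) = lam"
        using columns K by simp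
    qed
    finally show ?thesis
      by simp
  qed
  then show ?thesis
    unfolding large_set_def using fin steiner_system_image[OF \<sigma> st]
    by (simp add: filter_mset_image_mset flip: mset_filter)
qed

theorem theorem8:
  fixes t k n lam :: nat
  assumes "0 < t" and "t < k" and "k \<le> n" and "0 < lam"
    and "\<exists>(Q::nat set) B. card Q = n \<and> steiner_system t k Q B"
    and "\<exists>(X::nat set) M. card X = n \<and> perpendicular_array lam k n X M"
  shows "\<exists>(Q::nat set) F. card Q = n \<and>
           large_set t k (lam * (n choose t) div (k choose t)) Q F"
proof -
  obtain Q :: "nat set" and B where Q: "card Q = n" and st: "steiner_system t k Q B"
    using assms(5) by blast
  obtain X :: "nat set" and M where X: "card X = n" and pa: "perpendicular_array lam k n X M"
    using assms(6) by blast
  obtain \<phi> where "bij_betw \<phi> Q {..<card X}"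
    using st Q X finite_same_card_bij[of Q "{..<card X}"] unfolding steiner_system_def by auto
  then obtain F where "large_set t k (lam * card B) X F"
    using large_set_from_perpendicular_array[OF st] pa X by blast
  moreover have "lam * (n choose t) div (k choose t) = lam * card B"
    using assms(2) by (simp flip: steiner_system_card_blocks[OF st] Q)
  ultimately show ?thesis
    using X by metis
qed

end
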